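(* Let $V=\{1,\dots,n\}$ and let $F:2^V\to\mathbb{R}$ be a non-negative submodular set function with $F(\emptyset)=F(V)=0$. Define a directed graph $G=(V,E,c)$ with $E=\{(u,v)\in V\times V:u\neq v\}$ and $c_{uv}=\min\{F(A):A\subseteq V,\ u\in A,\ v\notin A\}$. Then for every $A\subseteq V$, \[\frac{1}{n^2/4}\,c^+(A)\le F(A)\le c^+(A).\] Moreover, if $F(A)\in\Delta\cdot\mathbb{Z}_{\ge0}$ for all $A$ for some $\Delta>0$, then every $c_{uv}$ is an integer multiple of $\Delta$.
   Context: For a weighted directed graph $(V,E,c)$, the cut function is $c^+(A)=\sum_{(u,v)\in E:\,u\in A,\,v\notin A}c_{uv}$ for $A\subseteq V$. *)

theory Defs
  imports "HOL-Analysis.Analysis"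
begin

definition submodular_on :: "'a set \<Rightarrow> ('a set \<Rightarrow> real) \<Rightarrow> bool" where
  "submodular_on V F \<longleftrightarrow>
     (\<forall>A B. A \<subseteq> V \<longrightarrow> B \<subseteq> V \<longrightarrow> F (A \<union> B) + F (A \<inter> B) \<le> F A + F B)"

definition cut_out :: "('a \<times> 'a) set \<Rightarrow> ('a \<Rightarrow> 'a \<Rightarrow> real) \<Rightarrow> 'a set \<Rightarrow> real" where
  "cut_out E c A = (\<Sum>(u,v)\<in>{(u,v)\<in>E. u \<in> A \<and> v \<notin> A}. c u v)"

definition complete_edges :: "'a set \<Rightarrow> ('a \<times> 'a) set" where
  "complete_edges V = {(u,v)\<in>V \<times> V. u \<noteq> v}"

definition cap_of :: "'a set \<Rightarrow> ('a set \<Rightarrow> real) \<Rightarrow> 'a \<Rightarrow> 'a \<Rightarrow> real" where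
  "cap_of V F u v = Min (F ` {A. A \<subseteq> V \<and> u \<in> A \<and> v \<notin> A})"

end

theory Submission
  imports Defs
begin

text \<open>Lower bound: each of the |A| |V - A| edges leaving A has weight at most F A, since A itself
  separates its endpoints, and |A| |V - A| \<le> n^2/4.
  Upper bound: choosing minimizers A_uv for u \<in> A, v \<notin> A gives
  A = \<Union>u\<in>A. \<Inter>v\<notin>A. A_uv, and a non-negative submodular function is subadditive under both
  unions and intersections, so F A \<le> \<Sum>u v. F A_uv = c^+(A).
  Integrality: every c_uv is a value of F, the minimum being attained.\<close>

lemma submodular_on_union_le:
  assumes "\<And>A. A \<subseteq> V \<Longrightarrow> F A \<ge> 0" "submodular_on V F" "A \<subseteq> V" "B \<subseteq> V"
  shows "F (A \<union> B) \<le> F A + F B"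
proof -
  have "F (A \<union> B) + F (A \<inter> B) \<le> F A + F B" using assms unfolding submodular_on_def by blast
  moreover have "F (A \<inter> B) \<ge> 0" using assms by blast
  ultimately show ?thesis by linarith
qed

lemma submodular_on_inter_le:
  assumes "\<And>A. A \<subseteq> V \<Longrightarrow> F A \<ge> 0" "submodular_on V F" "A \<subseteq> V" "B \<subseteq> V"
  shows "F (A \<inter> B) \<le> F A + F B"
proof -
  have "F (A \<union> B) + F (A \<inter> B) \<le> F A + F B" using assms unfolding submodular_on_def by blast
  moreover have "F (A \<union> B) \<ge> 0" using assms by blast
  ultimately show ?thesis by linarith
qed

lemma submodular_on_UNION_le:
  assumes "\<And>A. A \<subseteq> V \<Longrightarrow> F A \<ge> 0" "submodular_on V F" "F {} = 0"
    and "finite I" "\<And>i. i \<in> I \<Longrightarrow> B i \<subseteq> V"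
  shows "F (\<Union>i\<in>I. B i) \<le> (\<Sum>i\<in>I. F (B i))"
  using assms(4,5)
proof (induction I rule: finite_induct)
  case empty
  then show ?case using assms(3) by simp
next
  case (insert x I)
  have "F (\<Union>i\<in>insert x I. B i) \<le> F (B x) + F (\<Union>i\<in>I. B i)"
    using submodular_on_union_le[OF assms(1,2)] insert.prems by (simp add: UN_subset_iff)
  also have "\<dots> \<le> F (B x) + (\<Sum>i\<in>I. F (B i))" using insert.IH insert.prems by simp
  finally show ?case using insert.hyps by simp
qed

lemma submodular_on_INTER_le:
  assumes "\<And>A. A \<subseteq> V \<Longrightarrow> F A \<ge> 0" "submodular_on V F"
    and "finite I" "I \<noteq> {}" "\<And>i. i \<in> I \<Longrightarrow> B i \<subseteq> V"
  shows "F (\<Inter>i\<in>I. B i) \<le> (\<Sum>i\<in>I. F (B i))"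
  using assms(3-5)
proof (induction I rule: finite_ne_induct)
  case (singleton x)
  then show ?case by simp
next
  case (insert x I)
  have "(\<Inter>i\<in>I. B i) \<subseteq> V" using insert.hyps(2) insert.prems by blast
  then have "F (\<Inter>i\<in>insert x I. B i) \<le> F (B x) + F (\<Inter>i\<in>I. B i)"
    using submodular_on_inter_le[OF assms(1,2)] insert.prems by simp
  also have "\<dots> \<le> F (B x) + (\<Sum>i\<in>I. F (B i))" using insert.IH insert.prems by simp
  finally show ?case using insert.hyps by simp
qed

lemma cut_out_complete_edges:
  assumes "A \<subseteq> V"
  shows "cut_out (complete_edges V) c A = (\<Sum>u\<in>A. \<Sum>v\<in>V - A. c u v)"
proof -
  have "{(u,v)\<in>complete_edges V. u \<in> A \<and> v \<notin> A} = A \<times> (V - A)"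
    using assms unfolding complete_edges_def by auto
  then show ?thesis unfolding cut_out_def by (simp add: sum.cartesian_product)
qed

lemma cap_of_le:
  assumes "finite V" "B \<subseteq> V" "u \<in> B" "v \<notin> B"
  shows "cap_of V F u v \<le> F B"
proof -
  have "finite {A. A \<subseteq> V \<and> u \<in> A \<and> v \<notin> A}" using assms(1) by simp
  then show ?thesis unfolding cap_of_def using assms(2-4) by (intro Min_le) auto
qed

lemma cap_of_attained:
  assumes "finite V" "u \<in> V" "u \<noteq> v"
  obtains B where "B \<subseteq> V" "u \<in> B" "v \<notin> B" "F B = cap_of V F u v"
proof -
  let ?S = "{A. A \<subseteq> V \<and> u \<in> A \<and> v \<notin> A}"
  have "{u} \<in> ?S" using assms by auto
  then have "Min (F ` ?S) \<in> F ` ?S" using assms(1) by (intro Min_in) auto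
  then show ?thesis using that unfolding cap_of_def by force
qed

lemma card_mult_card_Diff_le:
  assumes "finite V" "A \<subseteq> V"
  shows "real (card A * card (V - A)) \<le> real (card V) ^ 2 / 4"
proof -
  have "real (card V) = real (card A) + real (card (V - A))"
    using card_Diff_subset[OF finite_subset[OF assms(2,1)] assms(2)] card_mono[OF assms] by simp
  moreover have "0 \<le> (real (card A) - real (card (V - A)))^2" by simp
  ultimately show ?thesis by (simp add: power2_eq_square algebra_simps)
qed

lemma cut_out_cap_of_le:
  assumes "finite V" "A \<subseteq> V" "F A \<ge> 0"
  shows "cut_out (complete_edges V) (cap_of V F) A \<le> real (card V) ^ 2 / 4 * F A"
proof -
  have "cut_out (complete_edges V) (cap_of V F) A \<le> (\<Sum>u\<in>A. \<Sum>v\<in>V - A. F A)"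
    unfolding cut_out_complete_edges[OF assms(2)]
    by (intro sum_mono cap_of_le[OF assms(1,2)]) auto
  also have "\<dots> = real (card A * card (V - A)) * F A" by simp
  also have "\<dots> \<le> real (card V) ^ 2 / 4 * F A"
    using card_mult_card_Diff_le[OF assms(1,2)] assms(3) by (rule mult_right_mono)
  finally show ?thesis .
qed

lemma Union_Inter_separating_sets:
  assumes "A \<subseteq> V" "A \<noteq> V"
    and "\<And>u v. u \<in> A \<Longrightarrow> v \<in> V - A \<Longrightarrow> S u v \<subseteq> V \<and> u \<in> S u v \<and> v \<notin> S u v"
  shows "A = (\<Union>u\<in>A. \<Inter>v\<in>V - A. S u v)"
proof
  show "A \<subseteq> (\<Union>u\<in>A. \<Inter>v\<in>V - A. S u v)" using assms(3) by blast
  obtain v0 where "v0 \<in> V - A" using assms(1,2) by blast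
  then show "(\<Union>u\<in>A. \<Inter>v\<in>V - A. S u v) \<subseteq> A" using assms(3) by blast
qed

lemma le_cut_out_cap_of:
  assumes "finite V" "\<And>A. A \<subseteq> V \<Longrightarrow> F A \<ge> 0" "submodular_on V F" "F {} = 0" "F V = 0"
    and "A \<subseteq> V"
  shows "F A \<le> cut_out (complete_edges V) (cap_of V F) A"
proof (cases "A = V")
  case True
  then show ?thesis using assms(5) by (simp add: cut_out_complete_edges)
next
  case False
  define S where "S u v = (SOME B. B \<subseteq> V \<and> u \<in> B \<and> v \<notin> B \<and> F B = cap_of V F u v)" for u v
  have S: "S u v \<subseteq> V \<and> u \<in> S u v \<and> v \<notin> S u v \<and> F (S u v) = cap_of V F u v"
    if "u \<in> A" "v \<in> V - A" for u v
  proof -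
    have "u \<in> V" "u \<noteq> v" using that assms(6) by auto
    then obtain B where "B \<subseteq> V \<and> u \<in> B \<and> v \<notin> B \<and> F B = cap_of V F u v"
      using cap_of_attained[OF assms(1)] by metis
    then show ?thesis unfolding S_def by (rule someI)
  qed
  have "V - A \<noteq> {}" using False assms(6) by blast
  then have S_inter: "(\<Inter>v\<in>V - A. S u v) \<subseteq> V" if "u \<in> A" for u
    using S[OF that] by blast
  have "A = (\<Union>u\<in>A. \<Inter>v\<in>V - A. S u v)"
    by (rule Union_Inter_separating_sets[OF assms(6) False]) (simp add: S)
  then have "F A = F (\<Union>u\<in>A. \<Inter>v\<in>V - A. S u v)" by simp
  also have "\<dots> \<le> (\<Sum>u\<in>A. F (\<Inter>v\<in>V - A. S u v))"
    by (rule submodular_on_UNION_le[OF assms(2-4) finite_subset[OF assms(6,1)] S_inter])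
  also have "\<dots> \<le> (\<Sum>u\<in>A. \<Sum>v\<in>V - A. F (S u v))"
  proof (rule sum_mono)
    fix u assume "u \<in> A"
    show "F (\<Inter>v\<in>V - A. S u v) \<le> (\<Sum>v\<in>V - A. F (S u v))"
      by (rule submodular_on_INTER_le[OF assms(2,3) _ \<open>V - A \<noteq> {}\<close>])
        (use assms(1) S[OF \<open>u \<in> A\<close>] in auto)
  qed
  also have "\<dots> = cut_out (complete_edges V) (cap_of V F) A"
    unfolding cut_out_complete_edges[OF assms(6)] by (intro sum.cong refl) (simp add: S)
  finally show ?thesis .
qed

lemma cap_of_in_values:
  assumes "finite V" "(u, v) \<in> complete_edges V"
  obtains B where "B \<subseteq> V" "cap_of V F u v = F B"
proof -
  have "u \<in> V" "u \<noteq> v" using assms(2) unfolding complete_edges_def by auto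
  then show ?thesis using cap_of_attained[OF assms(1)] that by metis
qed

theorem mainTheorem7:
  fixes n :: nat and F :: "nat set \<Rightarrow> real"
  defines "V \<equiv> {1..n}"
  assumes nonneg: "\<And>A. A \<subseteq> V \<Longrightarrow> F A \<ge> 0"
    and submod: "submodular_on V F"
    and empty0: "F {} = 0"
    and full0: "F V = 0"
  shows "(\<forall>A. A \<subseteq> V \<longrightarrow>
           1 / (real n ^ 2 / 4) * cut_out (complete_edges V) (cap_of V F) A \<le> F A
           \<and> F A \<le> cut_out (complete_edges V) (cap_of V F) A)
         \<and> (\<forall>\<Delta>::real. \<Delta> > 0 \<longrightarrow> (\<forall>A. A \<subseteq> V \<longrightarrow> (\<exists>k::nat. F A = \<Delta> * real k)) \<longrightarrow>
           (\<forall>(u,v)\<in>complete_edges V. \<exists>m::int. cap_of V F u v = \<Delta> * real_of_int m))"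
proof -
  have finV: "finite V" and cardV: "card V = n" unfolding V_def by simp_all
  show ?thesis
  proof (intro conjI allI impI)
    fix A assume AV: "A \<subseteq> V"
    show "F A \<le> cut_out (complete_edges V) (cap_of V F) A"
      using le_cut_out_cap_of[OF finV nonneg submod empty0 full0 AV] .
    show "1 / (real n ^ 2 / 4) * cut_out (complete_edges V) (cap_of V F) A \<le> F A"
      using cut_out_cap_of_le[of V A F, OF finV AV nonneg[OF AV]] nonneg[OF AV] cardV
      by (cases "n = 0") (simp_all add: field_simps)
  next
    fix \<Delta> :: real
    assume multiples: "\<forall>A. A \<subseteq> V \<longrightarrow> (\<exists>k::nat. F A = \<Delta> * real k)"
    show "\<forall>(u,v)\<in>complete_edges V. \<exists>m::int. cap_of V F u v = \<Delta> * real_of_int m"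
    proof clarify
      fix u v assume "(u, v) \<in> complete_edges V"
      then obtain B where "B \<subseteq> V" "cap_of V F u v = F B" by (rule cap_of_in_values[OF finV])
      with multiples obtain k :: nat where "cap_of V F u v = \<Delta> * real k" by auto
      then show "\<exists>m::int. cap_of V F u v = \<Delta> * real_of_int m" by (intro exI[of _ "int k"]) simp
    qed
  qed
qed

end
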